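(* Let $1\le p\le\infty$ and $E=\mathcal{L}^p(I)$. If $(f_m)$ is a Schauder basis of $E$ and $\Lambda<1/2$, then $(f_m*_T0)$ is a Schauder basis of $E$. If moreover $(f_m)$ is bounded, then the basis $(f_m*_T0)$ is also bounded.
   Context: Let $N\ge 2$, $I=[x_0,x_N]$, $\Delta: x_0<\dots<x_N$ a partition, $L_n(x)=a_nx+b_n$ affine with $L_n(x_0)=x_{n-1}$, $L_n(x_N)=x_n$, $I_1=[x_0,x_1]$, $I_n=(x_{n-1},x_n]$ for $n\ge2$, and $\alpha=(\alpha_1,\dots,\alpha_N)\in(\mathcal{L}^\infty(I))^N$ with $\Lambda:=\operatorname{ess\,sup}\{|\alpha_n(x)|:x\in I,n=1,\dots,N\}<1$. For $f,b\in E$, $f*_Tb$ is the unique fixed point in $E$ of the contraction $Tg(x):=f(x)+\alpha_n(L_n^{-1}(x))(g-b)(L_n^{-1}(x))$, $x\in I_n$; $0$ is the null function. A sequence $(x_m)$ is bounded if there are constants $0<k\le K$ with $k\le\|x_m\|_p\le K$ for all $m$. *)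

theory Defs
  imports "HOL-Analysis.Analysis" "HOL-Probability.Essential_Supremum"
begin

definition Ivl :: "(nat \<Rightarrow> real) \<Rightarrow> nat \<Rightarrow> real set" where
  "Ivl xs N = {xs 0 .. xs N}"

definition Isub :: "(nat \<Rightarrow> real) \<Rightarrow> nat \<Rightarrow> real set" where
  "Isub xs n = (if n = 1 then {xs 0 .. xs 1} else {xs (n - 1) <.. xs n})"

text \<open>The affine map L_n(t) = a_n t + b_n with L_n(x_0) = x_{n-1}, L_n(x_N) = x_n,
  and its inverse.\<close>
definition Lmap :: "(nat \<Rightarrow> real) \<Rightarrow> nat \<Rightarrow> nat \<Rightarrow> real \<Rightarrow> real" where
  "Lmap xs N n t = xs (n - 1) + (xs n - xs (n - 1)) / (xs N - xs 0) * (t - xs 0)"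

definition Linv :: "(nat \<Rightarrow> real) \<Rightarrow> nat \<Rightarrow> nat \<Rightarrow> real \<Rightarrow> real" where
  "Linv xs N n y = xs 0 + (xs N - xs 0) / (xs n - xs (n - 1)) * (y - xs (n - 1))"

text \<open>Membership in L^p(I), 1 <= p <= infinity (functions, identified up to a.e. equality
  through the seminorm).\<close>
definition inLp :: "ereal \<Rightarrow> (nat \<Rightarrow> real) \<Rightarrow> nat \<Rightarrow> (real \<Rightarrow> real) \<Rightarrow> bool" where
  "inLp p xs N f \<longleftrightarrow> f \<in> borel_measurable (lebesgue_on (Ivl xs N)) \<and>
     (if p = \<infinity> then esssup (lebesgue_on (Ivl xs N)) (\<lambda>t. ereal \<bar>f t\<bar>) < \<infinity>
      else integrable (lebesgue_on (Ivl xs N)) (\<lambda>t. \<bar>f t\<bar> powr real_of_ereal p))"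

definition Lpnorm :: "ereal \<Rightarrow> (nat \<Rightarrow> real) \<Rightarrow> nat \<Rightarrow> (real \<Rightarrow> real) \<Rightarrow> real" where
  "Lpnorm p xs N f =
     (if p = \<infinity> then real_of_ereal (esssup (lebesgue_on (Ivl xs N)) (\<lambda>t. ereal \<bar>f t\<bar>))
      else (integral\<^sup>L (lebesgue_on (Ivl xs N)) (\<lambda>t. \<bar>f t\<bar> powr real_of_ereal p))
             powr (1 / real_of_ereal p))"

definition schauder_basis :: "ereal \<Rightarrow> (nat \<Rightarrow> real) \<Rightarrow> nat \<Rightarrow> (nat \<Rightarrow> real \<Rightarrow> real) \<Rightarrow> bool" where
  "schauder_basis p xs N fs \<longleftrightarrow> (\<forall>m. inLp p xs N (fs m)) \<and>
     (\<forall>h. inLp p xs N h \<longrightarrow>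
        (\<exists>!c :: nat \<Rightarrow> real.
           (\<lambda>n. Lpnorm p xs N (\<lambda>t. h t - (\<Sum>m<n. c m * fs m t))) \<longlonglongrightarrow> 0))"

definition bounded_seq :: "ereal \<Rightarrow> (nat \<Rightarrow> real) \<Rightarrow> nat \<Rightarrow> (nat \<Rightarrow> real \<Rightarrow> real) \<Rightarrow> bool" where
  "bounded_seq p xs N fs \<longleftrightarrow>
     (\<exists>k K. 0 < k \<and> k \<le> K \<and> (\<forall>m. k \<le> Lpnorm p xs N (fs m) \<and> Lpnorm p xs N (fs m) \<le> K))"

definition Lambda :: "(nat \<Rightarrow> real) \<Rightarrow> nat \<Rightarrow> (nat \<Rightarrow> real \<Rightarrow> real) \<Rightarrow> ereal" where
  "Lambda xs N \<alpha> = esssup (lebesgue_on (Ivl xs N))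
      (\<lambda>t. Max ((\<lambda>n. ereal \<bar>\<alpha> n t\<bar>) ` {1..N}))"

definition Top :: "(nat \<Rightarrow> real) \<Rightarrow> nat \<Rightarrow> (nat \<Rightarrow> real \<Rightarrow> real) \<Rightarrow>
    (real \<Rightarrow> real) \<Rightarrow> (real \<Rightarrow> real) \<Rightarrow> (real \<Rightarrow> real) \<Rightarrow> real \<Rightarrow> real" where
  "Top xs N \<alpha> f b g t =
     f t + (\<Sum>n\<in>{1..N}. if t \<in> Isub xs n
        then \<alpha> n (Linv xs N n t) * (g (Linv xs N n t) - b (Linv xs N n t)) else 0)"

text \<open>f *_T b: the (a.e. unique) fixed point of T in E.\<close>
definition fractal :: "ereal \<Rightarrow> (nat \<Rightarrow> real) \<Rightarrow> nat \<Rightarrow> (nat \<Rightarrow> real \<Rightarrow> real) \<Rightarrow>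
    (real \<Rightarrow> real) \<Rightarrow> (real \<Rightarrow> real) \<Rightarrow> real \<Rightarrow> real" where
  "fractal p xs N \<alpha> f b = (SOME g. inLp p xs N g \<and>
      (AE t in lebesgue_on (Ivl xs N). Top xs N \<alpha> f b g t = g t))"

end

(*
  Let A g be the function equal to alpha_n(L_n^-1 x) * g(L_n^-1 x) on I_n, so that T g = f + A g
  for b = 0 and F = f *_T 0 satisfies F - A F = f almost everywhere.  Composing with L_n^-1 and
  restricting to I_n scales integrals by (x_n - x_(n-1)) / (x_N - x_0); these ratios sum to 1,
  hence ||A g||_p <= Lambda ||g||_p for every 1 <= p <= infinity.  So the Neumann series
  sum_k A^k f converges, which gives F, and (1 - Lambda) ||r|| <= ||r - A r|| <= (1 + Lambda) ||r||.
  As A is linear, r = h - sum_(m<n) c_m F_m satisfies r - A r = (h - A h) - sum_(m<n) c_m f_m: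
  the expansions of h in (F_m) are exactly those of h - A h in (f_m), and the two-sided norm
  bound carries boundedness over.
*)

theory Submission
  imports Defs
begin

section \<open>\<open>L\<^sup>p\<close> spaces over an arbitrary measure\<close>

(* inLp and Lpnorm of Defs, for an arbitrary measure instead of Lebesgue measure on Ivl xs N. *)
definition in_Lp :: "'a measure \<Rightarrow> ereal \<Rightarrow> ('a \<Rightarrow> real) \<Rightarrow> bool" where
  "in_Lp M p f \<longleftrightarrow> f \<in> borel_measurable M \<and>
     (if p = \<infinity> then esssup M (\<lambda>t. ereal \<bar>f t\<bar>) < \<infinity>
      else integrable M (\<lambda>t. \<bar>f t\<bar> powr real_of_ereal p))"

definition Lp_norm :: "'a measure \<Rightarrow> ereal \<Rightarrow> ('a \<Rightarrow> real) \<Rightarrow> real" where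
  "Lp_norm M p f =
     (if p = \<infinity> then real_of_ereal (esssup M (\<lambda>t. ereal \<bar>f t\<bar>))
      else (integral\<^sup>L M (\<lambda>t. \<bar>f t\<bar> powr real_of_ereal p)) powr (1 / real_of_ereal p))"

lemma in_Lp_borel_measurable: "in_Lp M p f \<Longrightarrow> f \<in> borel_measurable M"
  by (simp add: in_Lp_def)

lemma Lp_norm_abs [simp]: "Lp_norm M p (\<lambda>t. \<bar>f t\<bar>) = Lp_norm M p f"
  by (simp add: Lp_norm_def)

lemma in_Lp_abs: "in_Lp M p f \<Longrightarrow> in_Lp M p (\<lambda>t. \<bar>f t\<bar>)"
  by (auto simp: in_Lp_def intro: borel_measurable_abs)

lemma Lp_norm_uminus [simp]: "Lp_norm M p (\<lambda>t. - f t) = Lp_norm M p f"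
  by (simp add: Lp_norm_def)

lemma esssup_abs_eq_minf_or_nonneg:
  fixes f :: "'a \<Rightarrow> real"
  shows "esssup M (\<lambda>t. ereal \<bar>f t\<bar>) = - \<infinity> \<or> 0 \<le> esssup M (\<lambda>t. ereal \<bar>f t\<bar>)"
proof (rule disjCI)
  let ?E = "esssup M (\<lambda>t. ereal \<bar>f t\<bar>)"
  assume "\<not> 0 \<le> ?E"
  then have "?E \<noteq> top" by auto
  then have meas: "(\<lambda>t. ereal \<bar>f t\<bar>) \<in> borel_measurable M"
    using esssup_non_measurable by blast
  have "AE t in M. False"
    using esssup_AE[of "\<lambda>t. ereal \<bar>f t\<bar>" M]
  proof (rule eventually_mono)
    fix t assume "ereal \<bar>f t\<bar> \<le> ?E"
    moreover have "0 \<le> ereal \<bar>f t\<bar>" by simp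
    ultimately show False using \<open>\<not> 0 \<le> ?E\<close> by (meson order_trans)
  qed
  then have "AE t in M. ereal \<bar>f t\<bar> \<le> - \<infinity>" by (auto elim: eventually_mono)
  then have "?E \<le> - \<infinity>" by (rule esssup_I[OF meas])
  then show "?E = - \<infinity>" by simp
qed

lemma Lp_norm_nonneg: "0 \<le> Lp_norm M p f"
  using esssup_abs_eq_minf_or_nonneg[of M f] by (auto simp: Lp_norm_def real_of_ereal_pos)

lemma Linf_AE_abs_le_Lp_norm:
  assumes "in_Lp M \<infinity> f"
  shows "AE t in M. \<bar>f t\<bar> \<le> Lp_norm M \<infinity> f"
proof -
  let ?E = "esssup M (\<lambda>t. ereal \<bar>f t\<bar>)"
  have "?E < \<infinity>" using assms by (simp add: in_Lp_def)
  moreover have "AE t in M. ereal \<bar>f t\<bar> \<le> ?E" by (rule esssup_AE)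
  ultimately show ?thesis
    using esssup_abs_eq_minf_or_nonneg[of M f]
    by (cases ?E) (auto simp: Lp_norm_def elim!: eventually_mono)
qed

lemma in_Linf_normI:
  assumes "f \<in> borel_measurable M" "0 \<le> C" "AE t in M. \<bar>f t\<bar> \<le> C"
  shows "in_Lp M \<infinity> f" "Lp_norm M \<infinity> f \<le> C"
proof -
  let ?E = "esssup M (\<lambda>t. ereal \<bar>f t\<bar>)"
  have "?E \<le> ereal C"
    using assms by (intro esssup_I) (auto elim!: eventually_mono)
  then show "in_Lp M \<infinity> f" "Lp_norm M \<infinity> f \<le> C"
    using assms(1,2) by (cases ?E; auto simp: in_Lp_def Lp_norm_def)+
qed

lemma in_Lp_zero: "in_Lp M p (\<lambda>_. 0)"
proof (cases "p = \<infinity>")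
  case True
  then show ?thesis using in_Linf_normI(1)[of "\<lambda>_. 0" M 0] by simp
qed (simp add: in_Lp_def)

lemma Lp_norm_zero [simp]: "Lp_norm M p (\<lambda>_. 0) = 0"
proof (cases "p = \<infinity>")
  case True
  then show ?thesis
    using in_Linf_normI(2)[of "\<lambda>_. 0" M 0] Lp_norm_nonneg[of M \<infinity> "\<lambda>_. 0"] by simp
qed (simp add: Lp_norm_def)

lemma in_Lp_cmult: "in_Lp M p f \<Longrightarrow> in_Lp M p (\<lambda>t. c * f t)"
proof (cases "p = \<infinity>")
  case True
  assume f: "in_Lp M p f"
  have meas: "(\<lambda>t. c * f t) \<in> borel_measurable M"
    using in_Lp_borel_measurable[OF f] by simp
  have "AE t in M. \<bar>f t\<bar> \<le> Lp_norm M \<infinity> f"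
    using Linf_AE_abs_le_Lp_norm f True by simp
  then have "AE t in M. \<bar>c * f t\<bar> \<le> \<bar>c\<bar> * Lp_norm M \<infinity> f"
    by (rule eventually_mono) (simp add: abs_mult mult_left_mono)
  moreover have "0 \<le> \<bar>c\<bar> * Lp_norm M \<infinity> f" by (simp add: Lp_norm_nonneg)
  ultimately show ?thesis
    unfolding True using in_Linf_normI(1)[OF meas] by blast
next
  case False
  assume "in_Lp M p f"
  then show ?thesis
    using False by (auto simp: in_Lp_def abs_mult powr_mult)
qed

lemma Lp_norm_finite_powr:
  "0 < q \<Longrightarrow> Lp_norm M (ereal q) f powr q = (\<integral>t. \<bar>f t\<bar> powr q \<partial>M)"
  by (simp add: Lp_norm_def powr_powr integral_nonneg_AE)

lemma nn_integral_powr_eq_Lp_norm: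
  assumes "0 < q" "in_Lp M (ereal q) f"
  shows "(\<integral>\<^sup>+t. ennreal (\<bar>f t\<bar> powr q) \<partial>M) = ennreal (Lp_norm M (ereal q) f powr q)"
  using assms by (simp add: Lp_norm_finite_powr in_Lp_def nn_integral_eq_integral)

lemma in_Lp_finite_normI:
  assumes "0 < q" "f \<in> borel_measurable M" "0 \<le> C"
    and le: "(\<integral>\<^sup>+t. ennreal (\<bar>f t\<bar> powr q) \<partial>M) \<le> ennreal (C powr q)"
  shows "in_Lp M (ereal q) f" "Lp_norm M (ereal q) f \<le> C"
proof -
  have int: "integrable M (\<lambda>t. \<bar>f t\<bar> powr q)"
    using assms(2) le_less_trans[OF le ennreal_less_top] by (simp add: integrable_iff_bounded)
  then show "in_Lp M (ereal q) f" using assms(2) by (simp add: in_Lp_def)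
  have "(\<integral>t. \<bar>f t\<bar> powr q \<partial>M) \<le> C powr q"
    using le int by (simp add: nn_integral_eq_integral integral_nonneg_AE)
  then have "(\<integral>t. \<bar>f t\<bar> powr q \<partial>M) powr (1 / q) \<le> (C powr q) powr (1 / q)"
    using assms(1) by (intro powr_mono2) (auto intro: integral_nonneg_AE)
  then show "Lp_norm M (ereal q) f \<le> C"
    using assms(1,3) by (simp add: Lp_norm_def powr_powr)
qed

lemma powr_add_le_weighted:
  fixes q s u v :: real
  assumes "1 \<le> q" "0 < s" "s < 1" "0 \<le> u" "0 \<le> v"
  shows "(u + v) powr q \<le> s powr (1 - q) * u powr q + (1 - s) powr (1 - q) * v powr q"
proof -
  have weight_ge_1: "1 \<le> r powr (1 - q)" if "0 < r" "r < 1" for r :: real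
    using that assms(1) powr_le1[of "q - 1" r] by (simp add: powr_diff)
  consider "u = 0" | "v = 0" | "0 < u" "0 < v" using assms by linarith
  then show ?thesis
  proof cases
    case 1
    then show ?thesis using weight_ge_1[of "1 - s"] assms by (simp add: mult_le_cancel_right1)
  next
    case 2
    then show ?thesis using weight_ge_1[of s] assms by (simp add: mult_le_cancel_right1)
  next
    case 3
    have "u + v = (1 - (1 - s)) *\<^sub>R (u / s) + (1 - s) *\<^sub>R (v / (1 - s))"
      using assms by simp
    also have "\<dots> powr q \<le> (1 - (1 - s)) * (u / s) powr q + (1 - s) * (v / (1 - s)) powr q"
      using 3 assms by (intro convex_onD[OF powr_convex]) auto
    also have "\<dots> = s powr (1 - q) * u powr q + (1 - s) powr (1 - q) * v powr q"
      using assms by (simp add: powr_divide powr_diff)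
    finally show ?thesis .
  qed
qed

lemma powr_div_mult_powr:
  fixes C D q :: real
  assumes "0 < C" "0 < D"
  shows "(C / D) powr (1 - q) * C powr q = C / D * D powr q"
proof -
  have "(C / D) powr (1 - q) * C powr q = C powr (1 - q + q) / D powr (1 - q)"
    using assms by (simp add: powr_divide powr_add[symmetric])
  also have "\<dots> = C / D * D powr q"
    using assms by (simp add: powr_diff)
  finally show ?thesis .
qed

lemma AE_eq_0_if_Lp_norm_eq_0:
  assumes "0 < q" "in_Lp M (ereal q) h" "Lp_norm M (ereal q) h = 0"
  shows "AE t in M. h t = 0"
proof -
  have "(\<integral>\<^sup>+t. ennreal (\<bar>h t\<bar> powr q) \<partial>M) = 0"
    using assms by (simp add: nn_integral_powr_eq_Lp_norm)
  moreover have "(\<lambda>t. \<bar>h t\<bar> powr q) \<in> borel_measurable M"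
    using in_Lp_borel_measurable[OF assms(2)] by measurable
  ultimately have "AE t in M. ennreal (\<bar>h t\<bar> powr q) = 0"
    by (subst (asm) nn_integral_0_iff_AE) auto
  then show ?thesis by (rule eventually_mono) simp
qed

(* Minkowski's inequality: the weights s = A / (A + B) and 1 - s in powr_add_le_weighted
   integrate to exactly (A + B) powr q. *)
lemma nn_integral_powr_add_le:
  fixes f g :: "'a \<Rightarrow> real"
  assumes q: "1 \<le> q" and meas: "f \<in> borel_measurable M" "g \<in> borel_measurable M"
    and A: "0 < A" "(\<integral>\<^sup>+t. ennreal (\<bar>f t\<bar> powr q) \<partial>M) = ennreal (A powr q)"
    and B: "0 < B" "(\<integral>\<^sup>+t. ennreal (\<bar>g t\<bar> powr q) \<partial>M) = ennreal (B powr q)"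
  shows "(\<integral>\<^sup>+t. ennreal (\<bar>f t + g t\<bar> powr q) \<partial>M) \<le> ennreal ((A + B) powr q)"
proof -
  define s where "s = A / (A + B)"
  have s: "0 < s" "s < 1" "1 - s = B / (A + B)"
    using A B by (auto simp: s_def field_simps)
  have "(\<integral>\<^sup>+t. ennreal (\<bar>f t + g t\<bar> powr q) \<partial>M)
      \<le> (\<integral>\<^sup>+t. ennreal (s powr (1 - q)) * ennreal (\<bar>f t\<bar> powr q)
              + ennreal ((1 - s) powr (1 - q)) * ennreal (\<bar>g t\<bar> powr q) \<partial>M)"
  proof (intro nn_integral_mono)
    fix t
    have "\<bar>f t + g t\<bar> powr q \<le> (\<bar>f t\<bar> + \<bar>g t\<bar>) powr q"
      using q by (intro powr_mono2) auto
    also have "\<dots> \<le> s powr (1 - q) * \<bar>f t\<bar> powr q + (1 - s) powr (1 - q) * \<bar>g t\<bar> powr q"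
      using q s by (intro powr_add_le_weighted) auto
    finally show "ennreal (\<bar>f t + g t\<bar> powr q) \<le> ennreal (s powr (1 - q)) * ennreal (\<bar>f t\<bar> powr q)
              + ennreal ((1 - s) powr (1 - q)) * ennreal (\<bar>g t\<bar> powr q)"
      by (simp add: ennreal_mult'[symmetric] ennreal_plus[symmetric] del: ennreal_plus)
  qed
  also have "\<dots> = ennreal (s powr (1 - q)) * ennreal (A powr q)
      + ennreal ((1 - s) powr (1 - q)) * ennreal (B powr q)"
    using meas A B by (simp add: nn_integral_add nn_integral_cmult)
  also have "\<dots> = ennreal (s powr (1 - q) * A powr q + (1 - s) powr (1 - q) * B powr q)"
    by (simp add: ennreal_mult'[symmetric] ennreal_plus[symmetric] del: ennreal_plus)
  also have "s powr (1 - q) * A powr q + (1 - s) powr (1 - q) * B powr q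
      = (A / (A + B) + B / (A + B)) * (A + B) powr q"
    using powr_div_mult_powr[of A "A + B" q] powr_div_mult_powr[of B "A + B" q] A B
    unfolding s(3) by (simp add: s_def distrib_right)
  also have "\<dots> = (A + B) powr q"
    using A B by (simp add: add_divide_distrib[symmetric])
  finally show ?thesis .
qed

lemma summable_bounded_partial_sums_powr:
  fixes a :: "nat \<Rightarrow> real"
  assumes q: "0 < q" and a: "\<And>k. 0 \<le> a k"
    and fin: "(SUP n. ennreal ((\<Sum>k<n. a k) powr q)) \<noteq> \<infinity>"
  shows "summable a" "ennreal ((\<Sum>k. a k) powr q) \<le> (SUP n. ennreal ((\<Sum>k<n. a k) powr q))"
proof -
  obtain b where b: "(SUP n. ennreal ((\<Sum>k<n. a k) powr q)) = ennreal b" "0 \<le> b"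
    using fin by (cases "SUP n. ennreal ((\<Sum>k<n. a k) powr q)") auto
  have partial_le: "(\<Sum>k<n. a k) \<le> b powr (1 / q)" for n
  proof -
    have "ennreal ((\<Sum>k<n. a k) powr q) \<le> ennreal b"
      unfolding b(1)[symmetric] by (rule SUP_upper) simp
    then have "((\<Sum>k<n. a k) powr q) powr (1 / q) \<le> b powr (1 / q)"
      using q b(2) by (intro powr_mono2) (auto simp: ennreal_le_iff)
    then show ?thesis using q a by (simp add: powr_powr sum_nonneg)
  qed
  show sum: "summable a" by (rule summableI_nonneg_bounded[OF a partial_le])
  have "(\<Sum>k. a k) powr q \<le> (b powr (1 / q)) powr q"
    using q a suminf_le_const[OF sum partial_le] by (intro powr_mono2) (auto intro: suminf_nonneg[OF sum])
  then show "ennreal ((\<Sum>k. a k) powr q) \<le> (SUP n. ennreal ((\<Sum>k<n. a k) powr q))"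
    using q b by (simp add: powr_powr)
qed

lemma in_Lp_suminf_abs_infinite:
  assumes meas: "(\<lambda>t. \<Sum>k. \<bar>h k t\<bar>) \<in> borel_measurable M" and S: "0 \<le> S"
    and partial: "\<And>n. in_Lp M \<infinity> (\<lambda>t. \<Sum>k<n. \<bar>h k t\<bar>)"
      "\<And>n. Lp_norm M \<infinity> (\<lambda>t. \<Sum>k<n. \<bar>h k t\<bar>) \<le> S"
  shows "(AE t in M. summable (\<lambda>k. \<bar>h k t\<bar>)) \<and> in_Lp M \<infinity> (\<lambda>t. \<Sum>k. \<bar>h k t\<bar>)"
proof -
  have "AE t in M. \<forall>n. \<bar>\<Sum>k<n. \<bar>h k t\<bar>\<bar> \<le> Lp_norm M \<infinity> (\<lambda>t. \<Sum>k<n. \<bar>h k t\<bar>)"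
    unfolding AE_all_countable using Linf_AE_abs_le_Lp_norm[OF partial(1)] by blast
  then have bounded: "AE t in M. \<forall>n. (\<Sum>k<n. \<bar>h k t\<bar>) \<le> S"
    by (rule eventually_mono) (use partial(2) in \<open>fastforce intro: order_trans\<close>)
  then have summable: "AE t in M. summable (\<lambda>k. \<bar>h k t\<bar>)"
    by (rule eventually_mono) (auto intro: summableI_nonneg_bounded)
  have "AE t in M. \<bar>\<Sum>k. \<bar>h k t\<bar>\<bar> \<le> S"
    using bounded summable
  proof eventually_elim
    case (elim t)
    then show ?case using suminf_le_const[of "\<lambda>k. \<bar>h k t\<bar>" S] suminf_nonneg[of "\<lambda>k. \<bar>h k t\<bar>"]
      by simp
  qed
  then show ?thesis using summable in_Linf_normI(1)[OF meas S] by simp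
qed

(* The partial sums increase pointwise; by monotone convergence the integral of their supremum
   is finite, so the supremum is finite almost everywhere. *)

lemma in_Lp_suminf_abs_finite:
  assumes q: "0 < q" and meas: "(\<lambda>t. \<Sum>k. \<bar>h k t\<bar>) \<in> borel_measurable M" and S: "0 \<le> S"
    and partial: "\<And>n. in_Lp M (ereal q) (\<lambda>t. \<Sum>k<n. \<bar>h k t\<bar>)"
      "\<And>n. Lp_norm M (ereal q) (\<lambda>t. \<Sum>k<n. \<bar>h k t\<bar>) \<le> S"
  shows "(AE t in M. summable (\<lambda>k. \<bar>h k t\<bar>)) \<and> in_Lp M (ereal q) (\<lambda>t. \<Sum>k. \<bar>h k t\<bar>)"
proof -
  define F where "F n t = ennreal ((\<Sum>k<n. \<bar>h k t\<bar>) powr q)" for n t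
  have F_meas: "F n \<in> borel_measurable M" for n
    using in_Lp_borel_measurable[OF partial(1)] unfolding F_def by measurable
  have F_inc: "incseq (\<lambda>n. F n t)" for t
    unfolding F_def using q by (intro incseq_SucI ennreal_leI powr_mono2) (auto simp: sum_nonneg)
  have F_int: "(\<integral>\<^sup>+t. F n t \<partial>M) \<le> ennreal (S powr q)" for n
    using nn_integral_powr_eq_Lp_norm[OF q partial(1)] partial(2)[of n] q
    by (simp add: F_def sum_nonneg Lp_norm_nonneg powr_mono2)
  have SUP_int: "(\<integral>\<^sup>+t. (SUP n. F n t) \<partial>M) \<le> ennreal (S powr q)"
    using F_meas F_inc F_int
    by (subst nn_integral_monotone_convergence_SUP) (auto simp: incseq_def le_fun_def intro: SUP_least)
  have SUP_fin: "AE t in M. (SUP n. F n t) \<noteq> \<infinity>"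
  proof (rule nn_integral_PInf_AE)
    show "(\<lambda>t. SUP n. F n t) \<in> borel_measurable M" using F_meas by measurable
    show "(\<integral>\<^sup>+t. (SUP n. F n t) \<partial>M) \<noteq> \<infinity>"
      using le_less_trans[OF SUP_int ennreal_less_top] by simp
  qed
  have pointwise: "summable (\<lambda>k. \<bar>h k t\<bar>) \<and> ennreal (\<bar>\<Sum>k. \<bar>h k t\<bar>\<bar> powr q) \<le> (SUP n. F n t)"
    if "(SUP n. F n t) \<noteq> \<infinity>" for t
  proof -
    note partial_sums = summable_bounded_partial_sums_powr[OF q, of "\<lambda>k. \<bar>h k t\<bar>"]
    have sum: "summable (\<lambda>k. \<bar>h k t\<bar>)" using partial_sums(1) that by (simp add: F_def)
    moreover have "0 \<le> (\<Sum>k. \<bar>h k t\<bar>)" using suminf_nonneg[OF sum] by simp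
    ultimately show ?thesis using partial_sums(2) that by (simp add: F_def)
  qed
  have "AE t in M. summable (\<lambda>k. \<bar>h k t\<bar>)"
    using SUP_fin by (rule eventually_mono) (use pointwise in blast)
  moreover have "(\<integral>\<^sup>+t. ennreal (\<bar>\<Sum>k. \<bar>h k t\<bar>\<bar> powr q) \<partial>M) \<le> (\<integral>\<^sup>+t. (SUP n. F n t) \<partial>M)"
    using SUP_fin by (intro nn_integral_mono_AE) (use pointwise in \<open>auto elim!: eventually_mono\<close>)
  ultimately show ?thesis
    using in_Lp_finite_normI(1)[OF q meas S order.trans[OF _ SUP_int]] by simp
qed

locale Lp_exponent =
  fixes p :: ereal
  assumes one_le_p: "1 \<le> p"
begin

lemma exponent_cases:
  obtains "p = \<infinity>" | q where "p = ereal q" "1 \<le> q"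
  using one_le_p by (cases p) auto

lemma
  assumes f: "f \<in> borel_measurable M" and g: "in_Lp M p g"
    and le: "AE t in M. \<bar>f t\<bar> \<le> \<bar>g t\<bar>"
  shows in_Lp_mono_AE: "in_Lp M p f"
    and Lp_norm_mono_AE: "Lp_norm M p f \<le> Lp_norm M p g"
proof -
  have "in_Lp M p f \<and> Lp_norm M p f \<le> Lp_norm M p g"
  proof (cases rule: exponent_cases)
    case 1
    have "AE t in M. \<bar>g t\<bar> \<le> Lp_norm M p g"
      using Linf_AE_abs_le_Lp_norm g 1 by simp
    with le have "AE t in M. \<bar>f t\<bar> \<le> Lp_norm M p g"
      by eventually_elim auto
    then show ?thesis
      using in_Linf_normI[OF f Lp_norm_nonneg[of M p g]] 1 by simp
  next
    case (2 q)
    have "(\<integral>\<^sup>+t. ennreal (\<bar>f t\<bar> powr q) \<partial>M) \<le> (\<integral>\<^sup>+t. ennreal (\<bar>g t\<bar> powr q) \<partial>M)"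
      using le 2 by (intro nn_integral_mono_AE) (auto elim!: eventually_mono intro: powr_mono2)
    also have "\<dots> = ennreal (Lp_norm M p g powr q)"
      using g 2 by (simp add: nn_integral_powr_eq_Lp_norm)
    finally show ?thesis
      using in_Lp_finite_normI[OF _ f Lp_norm_nonneg[of M p g]] 2 by simp
  qed
  then show "in_Lp M p f" "Lp_norm M p f \<le> Lp_norm M p g" by auto
qed

lemma Lp_norm_cong_AE:
  assumes f: "f \<in> borel_measurable M" and g: "in_Lp M p g" and eq: "AE t in M. f t = g t"
  shows "Lp_norm M p f = Lp_norm M p g"
proof -
  have "Lp_norm M p f \<le> Lp_norm M p g"
    using eq by (intro Lp_norm_mono_AE[OF f g]) (auto elim: eventually_mono)
  moreover have "Lp_norm M p g \<le> Lp_norm M p f"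
    using eq by (intro Lp_norm_mono_AE[OF in_Lp_borel_measurable[OF g] in_Lp_mono_AE[OF f g]])
      (auto elim: eventually_mono)
  ultimately show ?thesis by simp
qed

lemma Lp_norm_add_le_finite:
  assumes p: "p = ereal q" "1 \<le> q" and f: "in_Lp M p f" and g: "in_Lp M p g"
  shows "in_Lp M p (\<lambda>t. f t + g t) \<and> Lp_norm M p (\<lambda>t. f t + g t) \<le> Lp_norm M p f + Lp_norm M p g"
proof -
  have meas: "(\<lambda>t. f t + g t) \<in> borel_measurable M"
    using in_Lp_borel_measurable[OF f] in_Lp_borel_measurable[OF g] by (rule borel_measurable_add)
  consider "Lp_norm M p f = 0" | "Lp_norm M p g = 0" | "0 < Lp_norm M p f" "0 < Lp_norm M p g"
    using Lp_norm_nonneg[of M p f] Lp_norm_nonneg[of M p g] by linarith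
  then show ?thesis
  proof cases
    case 1
    then have "AE t in M. \<bar>f t + g t\<bar> \<le> \<bar>g t\<bar>"
      using AE_eq_0_if_Lp_norm_eq_0[of q M f] f p by (auto elim: eventually_mono)
    then show ?thesis
      using in_Lp_mono_AE[OF meas g] Lp_norm_mono_AE[OF meas g] 1 by simp
  next
    case 2
    then have "AE t in M. \<bar>f t + g t\<bar> \<le> \<bar>f t\<bar>"
      using AE_eq_0_if_Lp_norm_eq_0[of q M g] g p by (auto elim: eventually_mono)
    then show ?thesis
      using in_Lp_mono_AE[OF meas f] Lp_norm_mono_AE[OF meas f] 2 by simp
  next
    case 3
    have "(\<integral>\<^sup>+t. ennreal (\<bar>f t + g t\<bar> powr q) \<partial>M)
        \<le> ennreal ((Lp_norm M p f + Lp_norm M p g) powr q)"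
      using p 3 f g
      by (intro nn_integral_powr_add_le) (auto simp: in_Lp_borel_measurable nn_integral_powr_eq_Lp_norm)
    from in_Lp_finite_normI[OF _ meas _ this] show ?thesis
      using p 3 by simp
  qed
qed

lemma
  assumes f: "in_Lp M p f" and g: "in_Lp M p g"
  shows in_Lp_add: "in_Lp M p (\<lambda>t. f t + g t)"
    and Lp_norm_add_le: "Lp_norm M p (\<lambda>t. f t + g t) \<le> Lp_norm M p f + Lp_norm M p g"
proof -
  have "in_Lp M p (\<lambda>t. f t + g t) \<and> Lp_norm M p (\<lambda>t. f t + g t) \<le> Lp_norm M p f + Lp_norm M p g"
  proof (cases rule: exponent_cases)
    case 1
    have "AE t in M. \<bar>f t\<bar> \<le> Lp_norm M p f" "AE t in M. \<bar>g t\<bar> \<le> Lp_norm M p g"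
      using Linf_AE_abs_le_Lp_norm f g 1 by simp_all
    then have bound: "AE t in M. \<bar>f t + g t\<bar> \<le> Lp_norm M p f + Lp_norm M p g"
      by eventually_elim auto
    have meas: "(\<lambda>t. f t + g t) \<in> borel_measurable M"
      using in_Lp_borel_measurable[OF f] in_Lp_borel_measurable[OF g] by (rule borel_measurable_add)
    have "0 \<le> Lp_norm M p f + Lp_norm M p g"
      by (simp add: Lp_norm_nonneg add_nonneg_nonneg)
    from in_Linf_normI[OF meas this bound] show ?thesis
      using 1 by simp
  next
    case (2 q)
    then show ?thesis by (rule Lp_norm_add_le_finite[OF _ _ f g])
  qed
  then show "in_Lp M p (\<lambda>t. f t + g t)"
    "Lp_norm M p (\<lambda>t. f t + g t) \<le> Lp_norm M p f + Lp_norm M p g" by auto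
qed

lemma
  assumes f: "in_Lp M p f" and g: "in_Lp M p g"
  shows in_Lp_diff: "in_Lp M p (\<lambda>t. f t - g t)"
    and Lp_norm_diff_le: "Lp_norm M p (\<lambda>t. f t - g t) \<le> Lp_norm M p f + Lp_norm M p g"
  using in_Lp_add[OF f in_Lp_cmult[OF g, of "-1"]] Lp_norm_add_le[OF f in_Lp_cmult[OF g, of "-1"]]
  by simp_all

lemma
  assumes "finite S" "\<And>k. k \<in> S \<Longrightarrow> in_Lp M p (h k)"
  shows in_Lp_sum: "in_Lp M p (\<lambda>t. \<Sum>k\<in>S. h k t)"
    and Lp_norm_sum_le: "Lp_norm M p (\<lambda>t. \<Sum>k\<in>S. h k t) \<le> (\<Sum>k\<in>S. Lp_norm M p (h k))"
proof -
  have "in_Lp M p (\<lambda>t. \<Sum>k\<in>S. h k t) \<and> Lp_norm M p (\<lambda>t. \<Sum>k\<in>S. h k t) \<le> (\<Sum>k\<in>S. Lp_norm M p (h k))"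
    using assms
  proof (induction S rule: finite_induct)
    case empty
    then show ?case by (simp add: in_Lp_zero)
  next
    case (insert k S)
    then have hk: "in_Lp M p (h k)"
      and IH: "in_Lp M p (\<lambda>t. \<Sum>k\<in>S. h k t)" "Lp_norm M p (\<lambda>t. \<Sum>k\<in>S. h k t) \<le> (\<Sum>k\<in>S. Lp_norm M p (h k))"
      by auto
    then show ?case
      using in_Lp_add[OF hk IH(1)] Lp_norm_add_le[OF hk IH(1)] insert.hyps by simp
  qed
  then show "in_Lp M p (\<lambda>t. \<Sum>k\<in>S. h k t)"
    "Lp_norm M p (\<lambda>t. \<Sum>k\<in>S. h k t) \<le> (\<Sum>k\<in>S. Lp_norm M p (h k))" by auto
qed

lemma Lp_norm_perturbation_bounds:
  assumes r: "in_Lp M p r" and s: "in_Lp M p s" and small: "Lp_norm M p s \<le> \<kappa> * Lp_norm M p r"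
  shows "(1 - \<kappa>) * Lp_norm M p r \<le> Lp_norm M p (\<lambda>t. r t - s t)"
    and "Lp_norm M p (\<lambda>t. r t - s t) \<le> (1 + \<kappa>) * Lp_norm M p r"
proof -
  have "Lp_norm M p r = Lp_norm M p (\<lambda>t. (r t - s t) + s t)" by simp
  also have "\<dots> \<le> Lp_norm M p (\<lambda>t. r t - s t) + Lp_norm M p s"
    by (rule Lp_norm_add_le[OF in_Lp_diff[OF r s] s])
  finally show "(1 - \<kappa>) * Lp_norm M p r \<le> Lp_norm M p (\<lambda>t. r t - s t)"
    using small by (simp add: algebra_simps)
  show "Lp_norm M p (\<lambda>t. r t - s t) \<le> (1 + \<kappa>) * Lp_norm M p r"
    using Lp_norm_diff_le[OF r s] small by (simp add: algebra_simps)
qed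

lemma
  assumes h: "\<And>k. in_Lp M p (h k)" and sum: "summable (\<lambda>k. Lp_norm M p (h k))"
  shows AE_summable_abs: "AE t in M. summable (\<lambda>k. \<bar>h k t\<bar>)"
    and in_Lp_suminf_abs: "in_Lp M p (\<lambda>t. \<Sum>k. \<bar>h k t\<bar>)"
proof -
  define S where "S = (\<Sum>k. Lp_norm M p (h k))"
  have S: "0 \<le> S" unfolding S_def by (intro suminf_nonneg[OF sum] Lp_norm_nonneg)
  have partial_Lp: "in_Lp M p (\<lambda>t. \<Sum>k<n. \<bar>h k t\<bar>)" for n
    by (intro in_Lp_sum in_Lp_abs h) simp
  have partial_norm: "Lp_norm M p (\<lambda>t. \<Sum>k<n. \<bar>h k t\<bar>) \<le> S" for n
  proof -
    have "Lp_norm M p (\<lambda>t. \<Sum>k<n. \<bar>h k t\<bar>) \<le> (\<Sum>k<n. Lp_norm M p (\<lambda>t. \<bar>h k t\<bar>))"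
      by (intro Lp_norm_sum_le in_Lp_abs h) simp
    also have "\<dots> \<le> S"
      unfolding S_def Lp_norm_abs by (intro sum_le_suminf[OF sum]) (auto simp: Lp_norm_nonneg)
    finally show ?thesis .
  qed
  have meas: "(\<lambda>t. \<Sum>k. \<bar>h k t\<bar>) \<in> borel_measurable M"
    using in_Lp_borel_measurable[OF h] by measurable
  have "(AE t in M. summable (\<lambda>k. \<bar>h k t\<bar>)) \<and> in_Lp M p (\<lambda>t. \<Sum>k. \<bar>h k t\<bar>)"
  proof (cases rule: exponent_cases)
    case 1
    then show ?thesis
      using in_Lp_suminf_abs_infinite[OF meas S] partial_Lp partial_norm by simp
  next
    case (2 q)
    then show ?thesis
      using in_Lp_suminf_abs_finite[of q, OF _ meas S] partial_Lp partial_norm by simp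
  qed
  then show "AE t in M. summable (\<lambda>k. \<bar>h k t\<bar>)" "in_Lp M p (\<lambda>t. \<Sum>k. \<bar>h k t\<bar>)" by auto
qed

end

section \<open>Compressed copies on a partition\<close>

lemma AE_lebesgue_real_affine:
  fixes c t :: real
  assumes c: "c \<noteq> 0" and P: "AE x in lebesgue. P x"
  shows "AE x in lebesgue. P (t + c * x)"
proof -
  obtain Z where Z: "{x. \<not> P x} \<subseteq> Z" "emeasure lebesgue Z = 0" "Z \<in> sets lebesgue"
    using P by (auto elim!: AE_E)
  define Z' where "Z' = {x. t + c * x \<in> Z}"
  have "(\<lambda>x. indicator Z (t + c *\<^sub>R x) :: real) \<in> borel_measurable lebesgue"
    using Z(3) by (intro borel_measurable_affine c) simp
  moreover have "(\<lambda>x. indicator Z (t + c *\<^sub>R x) :: real) = indicator Z'"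
    by (auto simp: Z'_def indicator_def)
  ultimately have Z': "Z' \<in> sets lebesgue"
    by (simp add: borel_measurable_indicator_iff)
  have "0 = (\<integral>\<^sup>+x. indicator Z x \<partial>lebesgue)" using Z by simp
  also have "\<dots> = ennreal \<bar>c\<bar> * (\<integral>\<^sup>+x. indicator Z (t + c * x) \<partial>lebesgue)"
    using Z(3) by (intro nn_integral_real_affine_lebesgue c) simp
  also have "(\<integral>\<^sup>+x. indicator Z (t + c * x) \<partial>lebesgue) = emeasure lebesgue Z'"
    using Z' by (simp add: Z'_def indicator_def[abs_def] of_bool_def flip: nn_integral_indicator)
  finally have "Z' \<in> null_sets lebesgue" using c Z' by auto
  moreover have "{x \<in> space lebesgue. \<not> P (t + c * x)} \<subseteq> Z'" using Z(1) by (auto simp: Z'_def)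
  ultimately show ?thesis by (rule AE_I')
qed

lemma Ivl_sets_lebesgue [simp]: "Ivl xs N \<in> sets lebesgue"
  by (simp add: Ivl_def)

definition compressed_copies ::
    "(nat \<Rightarrow> real) \<Rightarrow> nat \<Rightarrow> (nat \<Rightarrow> real \<Rightarrow> real) \<Rightarrow> (real \<Rightarrow> real) \<Rightarrow> real \<Rightarrow> real" where
  "compressed_copies xs N \<alpha> g t =
     (\<Sum>n\<in>{1..N}. indicator (Isub xs n) t * (\<alpha> n (Linv xs N n t) * g (Linv xs N n t)))"

lemma Top_zero_eq: "Top xs N \<alpha> f (\<lambda>_. 0) g t = f t + compressed_copies xs N \<alpha> g t"
  unfolding Top_def compressed_copies_def
  by (intro arg_cong2[where f="(+)"] refl sum.cong) (auto simp: indicator_def)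

lemma compressed_copies_diff:
  "compressed_copies xs N \<alpha> (\<lambda>s. f s - g s) t = compressed_copies xs N \<alpha> f t - compressed_copies xs N \<alpha> g t"
  by (simp add: compressed_copies_def algebra_simps sum_subtractf)

lemma compressed_copies_sum:
  "compressed_copies xs N \<alpha> (\<lambda>s. \<Sum>m\<in>S. c m * f m s) t = (\<Sum>m\<in>S. c m * compressed_copies xs N \<alpha> (f m) t)"
proof -
  let ?a = "\<lambda>n m. c m * (indicator (Isub xs n) t * (\<alpha> n (Linv xs N n t) * f m (Linv xs N n t)))"
  have "compressed_copies xs N \<alpha> (\<lambda>s. \<Sum>m\<in>S. c m * f m s) t = (\<Sum>n\<in>{1..N}. \<Sum>m\<in>S. ?a n m)"
    unfolding compressed_copies_def sum_distrib_left by (intro sum.cong refl) (simp only: ac_simps)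
  also have "\<dots> = (\<Sum>m\<in>S. \<Sum>n\<in>{1..N}. ?a n m)"
    by (rule sum.swap)
  also have "\<dots> = (\<Sum>m\<in>S. c m * compressed_copies xs N \<alpha> (f m) t)"
    by (simp only: compressed_copies_def sum_distrib_left)
  finally show ?thesis .
qed

locale partition =
  fixes N :: nat and xs :: "nat \<Rightarrow> real"
  assumes N_pos: "0 < N" and xs_less_Suc: "\<And>i. i < N \<Longrightarrow> xs i < xs (Suc i)"
begin

lemma xs_less: "i < j \<Longrightarrow> j \<le> N \<Longrightarrow> xs i < xs j"
proof (induction j)
  case (Suc j)
  then show ?case using xs_less_Suc[of j] by (cases "i = j") auto
qed simp

lemma xs_le: "i \<le> j \<Longrightarrow> j \<le> N \<Longrightarrow> xs i \<le> xs j"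
  using xs_less[of i j] by (cases "i = j") auto

lemma Isub_bounds: "n \<in> {1..N} \<Longrightarrow> t \<in> Isub xs n \<Longrightarrow> xs (n - 1) \<le> t \<and> t \<le> xs n"
  by (cases "n = 1") (auto simp: Isub_def)

lemma Isub_disjoint:
  assumes "n \<in> {1..N}" "m \<in> {1..N}" "t \<in> Isub xs n" "t \<in> Isub xs m"
  shows "n = m"
proof -
  have False if "a \<in> {1..N}" "b \<in> {1..N}" "a < b" "t \<in> Isub xs a" "t \<in> Isub xs b" for a b
  proof -
    have "t \<le> xs a" using Isub_bounds that(1,4) by blast
    also have "xs a \<le> xs (b - 1)" using that by (intro xs_le) auto
    also have "xs (b - 1) < t" using that(1,3,5) by (auto simp: Isub_def)
    finally show False by simp
  qed
  then show ?thesis using assms by (metis linorder_neqE_nat)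
qed

lemma sum_indicator_Isub:
  fixes f :: "nat \<Rightarrow> 'a::comm_semiring_1"
  assumes n: "n \<in> {1..N}" "t \<in> Isub xs n"
  shows "(\<Sum>m\<in>{1..N}. indicator (Isub xs m) t * f m) = f n"
proof -
  have "(\<Sum>m\<in>{1..N}. indicator (Isub xs m) t * f m) = (\<Sum>m\<in>{1..N}. if m = n then f n else 0)"
  proof (intro sum.cong refl)
    fix m assume m: "m \<in> {1..N}"
    show "indicator (Isub xs m) t * f m = (if m = n then f n else 0)"
    proof (cases "m = n")
      case False
      then have "t \<notin> Isub xs m" using Isub_disjoint[OF m n(1) _ n(2)] by blast
      then show ?thesis using False by simp
    qed (simp add: n(2))
  qed
  then show ?thesis using n(1) by simp
qed

lemma sum_Isub_ratios_mult:
  "(\<Sum>n\<in>{1..N}. ennreal ((xs n - xs (n - 1)) / (xs N - xs 0)) * B) = B"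
proof -
  have "(\<Sum>n\<in>{1..K}. xs n - xs (n - 1)) = xs K - xs 0" for K
    by (induction K) auto
  then have "(\<Sum>n\<in>{1..N}. (xs n - xs (n - 1)) / (xs N - xs 0)) = 1"
    using xs_less[of 0 N] N_pos by (simp add: sum_divide_distrib[symmetric])
  moreover have "0 \<le> (xs n - xs (n - 1)) / (xs N - xs 0)" if "n \<in> {1..N}" for n
    using xs_le[of "n - 1" n] xs_less[of 0 N] N_pos that by simp
  then have "(\<Sum>n\<in>{1..N}. ennreal ((xs n - xs (n - 1)) / (xs N - xs 0)))
      = ennreal (\<Sum>n\<in>{1..N}. (xs n - xs (n - 1)) / (xs N - xs 0))"
    by (rule sum_ennreal)
  ultimately show ?thesis by (simp only: sum_distrib_right[symmetric] ennreal_1 mult_1)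
qed

lemma Linv_affine:
  "Linv xs N n t = (xs 0 - (xs N - xs 0) / (xs n - xs (n - 1)) * xs (n - 1))
     + (xs N - xs 0) / (xs n - xs (n - 1)) * t"
  unfolding Linv_def right_diff_distrib by linarith

lemma Linv_scale_pos: "n \<in> {1..N} \<Longrightarrow> 0 < (xs N - xs 0) / (xs n - xs (n - 1))"
  using xs_less[of 0 N] xs_less[of "n - 1" n] N_pos by simp

lemma Linv_in_Ivl:
  assumes n: "n \<in> {1..N}" and t: "t \<in> Isub xs n"
  shows "Linv xs N n t \<in> Ivl xs N"
proof -
  define c where "c = (xs N - xs 0) / (xs n - xs (n - 1))"
  have c: "0 < c" using Linv_scale_pos[OF n] by (simp add: c_def)
  have "0 \<le> c * (t - xs (n - 1))" "c * (t - xs (n - 1)) \<le> c * (xs n - xs (n - 1))"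
    using c Isub_bounds[OF n t] by (auto intro: mult_left_mono)
  moreover have "c * (xs n - xs (n - 1)) = xs N - xs 0"
    using xs_less[of "n - 1" n] n by (simp add: c_def)
  moreover have "Linv xs N n t = xs 0 + c * (t - xs (n - 1))" by (simp add: Linv_def c_def)
  ultimately show ?thesis by (simp add: Ivl_def)
qed

lemma AE_Isub_Linv:
  assumes n: "n \<in> {1..N}" and P: "AE s in lebesgue_on (Ivl xs N). P s"
  shows "AE t in lebesgue_on (Ivl xs N). t \<in> Isub xs n \<longrightarrow> P (Linv xs N n t)"
proof -
  have "AE s in lebesgue. s \<in> Ivl xs N \<longrightarrow> P s"
    using P by (simp add: AE_restrict_space_iff)
  then have "AE t in lebesgue. Linv xs N n t \<in> Ivl xs N \<longrightarrow> P (Linv xs N n t)"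
    unfolding Linv_affine using Linv_scale_pos[OF n] by (intro AE_lebesgue_real_affine) auto
  then show ?thesis
    using Linv_in_Ivl[OF n] by (simp add: AE_restrict_space_iff) (auto elim: eventually_mono)
qed

lemma borel_measurable_Isub_Linv:
  fixes h :: "real \<Rightarrow> real"
  assumes n: "n \<in> {1..N}" and h: "h \<in> borel_measurable (lebesgue_on (Ivl xs N))"
  shows "(\<lambda>t. indicator (Isub xs n) t * h (Linv xs N n t)) \<in> borel_measurable lebesgue"
proof -
  define c where "c = (xs N - xs 0) / (xs n - xs (n - 1))"
  define t0 where "t0 = xs 0 - c * xs (n - 1)"
  have c: "c \<noteq> 0" using Linv_scale_pos[OF n] unfolding c_def by linarith
  have "(\<lambda>s. indicator (Ivl xs N) s * h s) \<in> borel_measurable lebesgue"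
    using h borel_measurable_restrict_space_iff[of "Ivl xs N" lebesgue h] by simp
  from borel_measurable_affine[OF this c, of t0]
  have "(\<lambda>t. indicator (Ivl xs N) (t0 + c * t) * h (t0 + c * t)) \<in> borel_measurable lebesgue"
    by simp
  moreover have "Isub xs n \<in> sets lebesgue" by (simp add: Isub_def)
  ultimately have "(\<lambda>t. indicator (Isub xs n) t * (indicator (Ivl xs N) (t0 + c * t) * h (t0 + c * t)))
      \<in> borel_measurable lebesgue"
    by simp
  also have "(\<lambda>t. indicator (Isub xs n) t * (indicator (Ivl xs N) (t0 + c * t) * h (t0 + c * t)))
      = (\<lambda>t. indicator (Isub xs n) t * h (Linv xs N n t))"
    using Linv_in_Ivl[OF n] by (auto simp: Linv_affine c_def t0_def indicator_def fun_eq_iff)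
  finally show ?thesis .
qed

lemma nn_integral_Isub_Linv_le:
  assumes n: "n \<in> {1..N}" and h: "h \<in> borel_measurable (lebesgue_on (Ivl xs N))"
  shows "(\<integral>\<^sup>+t. ennreal (indicator (Isub xs n) t * h (Linv xs N n t)) \<partial>lebesgue)
    \<le> ennreal ((xs n - xs (n - 1)) / (xs N - xs 0)) * (\<integral>\<^sup>+s. ennreal (h s) \<partial>lebesgue_on (Ivl xs N))"
proof -
  define c where "c = (xs N - xs 0) / (xs n - xs (n - 1))"
  define t0 where "t0 = xs 0 - c * xs (n - 1)"
  define he where "he s = ennreal (indicator (Ivl xs N) s * h s)" for s
  have c: "0 < c" using Linv_scale_pos[OF n] by (simp add: c_def)
  have "(\<lambda>s. indicator (Ivl xs N) s * h s) \<in> borel_measurable lebesgue"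
    using h borel_measurable_restrict_space_iff[of "Ivl xs N" lebesgue h] by simp
  then have he: "he \<in> borel_measurable lebesgue"
    unfolding he_def by measurable
  have "(\<integral>\<^sup>+t. ennreal (indicator (Isub xs n) t * h (Linv xs N n t)) \<partial>lebesgue)
      \<le> (\<integral>\<^sup>+t. he (t0 + c * t) \<partial>lebesgue)"
    using Linv_in_Ivl[OF n]
    by (intro nn_integral_mono) (auto simp: he_def indicator_def Linv_affine c_def t0_def)
  also have "\<dots> = ennreal (1 / c) * (\<integral>\<^sup>+s. he s \<partial>lebesgue)"
    using nn_integral_real_affine_lebesgue[OF he, of c t0] c
    by (simp add: mult.assoc[symmetric] ennreal_mult[symmetric])
  also have "(\<integral>\<^sup>+s. he s \<partial>lebesgue) = (\<integral>\<^sup>+s. ennreal (h s) \<partial>lebesgue_on (Ivl xs N))"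
    unfolding he_def by (subst nn_integral_restrict_space) (auto intro!: nn_integral_cong simp: indicator_def)
  finally show ?thesis by (simp add: c_def)
qed

lemma compressed_copies_cases:
  obtains n where "n \<in> {1..N}" "t \<in> Isub xs n"
      "\<And>\<alpha> g. compressed_copies xs N \<alpha> g t = \<alpha> n (Linv xs N n t) * g (Linv xs N n t)"
  | "\<forall>n\<in>{1..N}. t \<notin> Isub xs n" "\<And>\<alpha> g. compressed_copies xs N \<alpha> g t = 0"
proof (cases "\<exists>n\<in>{1..N}. t \<in> Isub xs n")
  case True
  then obtain n where n: "n \<in> {1..N}" "t \<in> Isub xs n" ..
  have "compressed_copies xs N \<alpha> g t = \<alpha> n (Linv xs N n t) * g (Linv xs N n t)" for \<alpha> g
    unfolding compressed_copies_def by (rule sum_indicator_Isub[OF n])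
  then show ?thesis by (rule that(1)[OF n])
next
  case False
  then show ?thesis
    using that(2) by (simp add: compressed_copies_def)
qed

lemma compressed_copies_abs_powr:
  "\<bar>compressed_copies xs N \<alpha> g t\<bar> powr q = (\<Sum>n\<in>{1..N}.
     indicator (Isub xs n) t * (\<bar>\<alpha> n (Linv xs N n t)\<bar> * \<bar>g (Linv xs N n t)\<bar>) powr q)"
proof (cases t rule: compressed_copies_cases)
  case (1 n)
  then show ?thesis
    unfolding sum_indicator_Isub[OF 1(1,2)] by (simp add: abs_mult)
next
  case 2
  then have "indicator (Isub xs n) t = (0::real)" if "n \<in> {1..N}" for n
    using that by simp
  with 2 show ?thesis by simp
qed

lemma suminf_iterates_compressed_copies:
  fixes \<alpha> :: "nat \<Rightarrow> real \<Rightarrow> real" and f :: "real \<Rightarrow> real"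
  defines "h k \<equiv> (compressed_copies xs N \<alpha> ^^ k) f"
  assumes sum: "summable (\<lambda>k. \<bar>h k t\<bar>)"
  shows "(\<Sum>k. h k t) = f t + compressed_copies xs N \<alpha> (\<lambda>s. \<Sum>k. h k s) t"
proof -
  have "(\<Sum>k. h k t) = h 0 t + (\<Sum>k. h (Suc k) t)"
    using suminf_split_head[OF summable_rabs_cancel[OF sum]] by linarith
  moreover have "h 0 t = f t" by (simp add: h_def)
  moreover have "(\<Sum>k. h (Suc k) t) = compressed_copies xs N \<alpha> (\<lambda>s. \<Sum>k. h k s) t"
  proof (cases t rule: compressed_copies_cases)
    case (1 n)
    define a y where "a = \<alpha> n (Linv xs N n t)" and "y = Linv xs N n t"
    have step: "h (Suc k) t = a * h k y" for k
      unfolding h_def a_def y_def by (simp only: funpow.simps comp_apply 1(3))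
    have copy: "compressed_copies xs N \<alpha> (\<lambda>s. \<Sum>k. h k s) t = a * (\<Sum>k. h k y)"
      unfolding a_def y_def by (rule 1(3))
    show ?thesis
    proof (cases "a = 0")
      case True
      then show ?thesis by (simp add: step copy)
    next
      case False
      have "summable (\<lambda>k. \<bar>h (Suc k) t\<bar>)"
        using sum by (subst summable_Suc_iff)
      then have "summable (\<lambda>k. \<bar>a\<bar> * \<bar>h k y\<bar>)"
        by (simp only: step abs_mult)
      then have "summable (\<lambda>k. h k y)"
        using False by (intro summable_rabs_cancel[of "\<lambda>k. h k y"]) (simp add: summable_cmult_iff)
      then show ?thesis by (simp add: step copy suminf_mult)
    qed
  next
    case 2
    then show ?thesis by (simp add: h_def)
  qed
  ultimately show ?thesis by simp
qed

end

section \<open>Fractal perturbation of a Schauder basis\<close>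

lemma inLp_eq_in_Lp: "inLp p xs N = in_Lp (lebesgue_on (Ivl xs N)) p"
  by (simp add: fun_eq_iff inLp_def in_Lp_def)

lemma Lpnorm_eq_Lp_norm: "Lpnorm p xs N = Lp_norm (lebesgue_on (Ivl xs N)) p"
  by (simp add: fun_eq_iff Lpnorm_def Lp_norm_def)

lemma AE_abs_le_of_Lambda_less:
  assumes "Lambda xs N \<alpha> < ereal c"
  shows "AE s in lebesgue_on (Ivl xs N). \<forall>n\<in>{1..N}. \<bar>\<alpha> n s\<bar> \<le> c"
  using esssup_AE[of "\<lambda>s. Max ((\<lambda>n. ereal \<bar>\<alpha> n s\<bar>) ` {1..N})" "lebesgue_on (Ivl xs N)"]
proof (rule eventually_mono, intro ballI)
  fix s n assume le: "Max ((\<lambda>n. ereal \<bar>\<alpha> n s\<bar>) ` {1..N}) \<le> esssup (lebesgue_on (Ivl xs N))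
      (\<lambda>s. Max ((\<lambda>n. ereal \<bar>\<alpha> n s\<bar>) ` {1..N}))" and n: "n \<in> {1..N}"
  have "ereal \<bar>\<alpha> n s\<bar> \<le> Max ((\<lambda>n. ereal \<bar>\<alpha> n s\<bar>) ` {1..N})"
    using n by (intro Max_ge) auto
  also note le
  also have "esssup (lebesgue_on (Ivl xs N)) (\<lambda>s. Max ((\<lambda>n. ereal \<bar>\<alpha> n s\<bar>) ` {1..N})) < ereal c"
    using assms by (simp add: Lambda_def)
  finally show "\<bar>\<alpha> n s\<bar> \<le> c" by simp
qed

lemma LIMSEQ_zero_iff_mutually_bounded:
  fixes a b :: "nat \<Rightarrow> real"
  assumes "\<And>n. 0 \<le> a n" "\<And>n. 0 \<le> b n" "\<And>n. a n \<le> C * b n" "\<And>n. b n \<le> D * a n"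
  shows "a \<longlonglongrightarrow> 0 \<longleftrightarrow> b \<longlonglongrightarrow> 0"
proof
  assume "a \<longlonglongrightarrow> 0"
  then have "(\<lambda>n. D * a n) \<longlonglongrightarrow> 0" by (rule tendsto_mult_right_zero)
  then show "b \<longlonglongrightarrow> 0"
    by (rule Lim_null_comparison[rotated]) (use assms in simp)
next
  assume "b \<longlonglongrightarrow> 0"
  then have "(\<lambda>n. C * b n) \<longlonglongrightarrow> 0" by (rule tendsto_mult_right_zero)
  then show "a \<longlonglongrightarrow> 0"
    by (rule Lim_null_comparison[rotated]) (use assms in simp)
qed

(* \<kappa> plays the role of Lambda; 1/2 is instantiated only in the final theorem. *)
locale fractal_setting = partition N xs + Lp_exponent p
  for N :: nat and xs :: "nat \<Rightarrow> real" and p :: ereal +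
  fixes \<alpha> :: "nat \<Rightarrow> real \<Rightarrow> real" and \<kappa> :: real
  assumes \<alpha>_measurable: "\<And>n. n \<in> {1..N} \<Longrightarrow> \<alpha> n \<in> borel_measurable (lebesgue_on (Ivl xs N))"
    and \<kappa>_nonneg: "0 \<le> \<kappa>" and \<kappa>_less_1: "\<kappa> < 1"
    and \<alpha>_bound: "AE s in lebesgue_on (Ivl xs N). \<forall>n\<in>{1..N}. \<bar>\<alpha> n s\<bar> \<le> \<kappa>"
begin

abbreviation "M \<equiv> lebesgue_on (Ivl xs N)"
abbreviation "A \<equiv> compressed_copies xs N \<alpha>"

lemma borel_measurable_compressed_copies:
  assumes g: "g \<in> borel_measurable M"
  shows "A g \<in> borel_measurable M"
proof -
  have "(\<lambda>t. indicator (Isub xs n) t * (\<alpha> n (Linv xs N n t) * g (Linv xs N n t)))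
      \<in> borel_measurable lebesgue" if n: "n \<in> {1..N}" for n
    using borel_measurable_Isub_Linv[OF n, of "\<lambda>s. \<alpha> n s * g s"] \<alpha>_measurable[OF n] g by simp
  then have "A g \<in> borel_measurable lebesgue"
    unfolding compressed_copies_def[abs_def] by (rule borel_measurable_sum)
  then show ?thesis by (rule measurable_restrict_space1)
qed

lemma Lp_norm_compressed_copies_le_infinite:
  assumes p: "p = \<infinity>" and g: "in_Lp M p g"
  shows "in_Lp M p (A g) \<and> Lp_norm M p (A g) \<le> \<kappa> * Lp_norm M p g"
proof -
  define P where "P s \<longleftrightarrow> (\<forall>n\<in>{1..N}. \<bar>\<alpha> n s\<bar> \<le> \<kappa>) \<and> \<bar>g s\<bar> \<le> Lp_norm M p g" for s
  have "AE s in M. \<bar>g s\<bar> \<le> Lp_norm M p g"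
    using Linf_AE_abs_le_Lp_norm g p by simp
  with \<alpha>_bound have "AE s in M. P s"
    unfolding P_def by eventually_elim simp
  then have "AE t in M. \<forall>n\<in>{1..N}. t \<in> Isub xs n \<longrightarrow> P (Linv xs N n t)"
    by (intro eventually_ball_finite ballI AE_Isub_Linv) auto
  then have "AE t in M. \<bar>A g t\<bar> \<le> \<kappa> * Lp_norm M p g"
  proof (rule eventually_mono)
    fix t assume P_pieces: "\<forall>n\<in>{1..N}. t \<in> Isub xs n \<longrightarrow> P (Linv xs N n t)"
    show "\<bar>A g t\<bar> \<le> \<kappa> * Lp_norm M p g"
    proof (cases t rule: compressed_copies_cases)
      case (1 n)
      then have "P (Linv xs N n t)" using P_pieces by blast
      then show ?thesis
        using 1 \<kappa>_nonneg by (auto simp: P_def abs_mult intro: mult_mono)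
    next
      case 2
      then show ?thesis using \<kappa>_nonneg Lp_norm_nonneg[of M p g] by simp
    qed
  qed
  moreover have "0 \<le> \<kappa> * Lp_norm M p g" using \<kappa>_nonneg by (simp add: Lp_norm_nonneg)
  ultimately show ?thesis
    using in_Linf_normI[OF borel_measurable_compressed_copies[OF in_Lp_borel_measurable[OF g]]] p
    by simp
qed

lemma nn_integral_alpha_powr_le:
  assumes n: "n \<in> {1..N}" and p: "p = ereal q" "1 \<le> q" and g: "in_Lp M p g"
  shows "(\<integral>\<^sup>+s. ennreal ((\<bar>\<alpha> n s\<bar> * \<bar>g s\<bar>) powr q) \<partial>M) \<le> ennreal ((\<kappa> * Lp_norm M p g) powr q)"
proof -
  have "(\<integral>\<^sup>+s. ennreal ((\<bar>\<alpha> n s\<bar> * \<bar>g s\<bar>) powr q) \<partial>M)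
      \<le> (\<integral>\<^sup>+s. ennreal (\<kappa> powr q) * ennreal (\<bar>g s\<bar> powr q) \<partial>M)"
  proof (intro nn_integral_mono_AE, use \<alpha>_bound in \<open>rule eventually_mono\<close>)
    fix s assume "\<forall>n\<in>{1..N}. \<bar>\<alpha> n s\<bar> \<le> \<kappa>"
    then have "(\<bar>\<alpha> n s\<bar> * \<bar>g s\<bar>) powr q \<le> (\<kappa> * \<bar>g s\<bar>) powr q"
      using n p by (intro powr_mono2 mult_right_mono) auto
    then show "ennreal ((\<bar>\<alpha> n s\<bar> * \<bar>g s\<bar>) powr q) \<le> ennreal (\<kappa> powr q) * ennreal (\<bar>g s\<bar> powr q)"
      using \<kappa>_nonneg by (simp add: powr_mult ennreal_mult'[symmetric] ennreal_leI)
  qed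
  also have "\<dots> = ennreal (\<kappa> powr q) * ennreal (Lp_norm M p g powr q)"
    using g p in_Lp_borel_measurable[OF g]
    by (simp add: nn_integral_cmult nn_integral_powr_eq_Lp_norm)
  also have "\<dots> = ennreal ((\<kappa> * Lp_norm M p g) powr q)"
    using \<kappa>_nonneg by (simp add: powr_mult Lp_norm_nonneg ennreal_mult'[symmetric])
  finally show ?thesis .
qed

lemma Lp_norm_compressed_copies_le_finite:
  assumes p: "p = ereal q" "1 \<le> q" and g: "in_Lp M p g"
  shows "in_Lp M p (A g) \<and> Lp_norm M p (A g) \<le> \<kappa> * Lp_norm M p g"
proof -
  define h where "h n s = (\<bar>\<alpha> n s\<bar> * \<bar>g s\<bar>) powr q" for n s
  have h_meas: "h n \<in> borel_measurable M" if "n \<in> {1..N}" for n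
    using \<alpha>_measurable[OF that] in_Lp_borel_measurable[OF g] unfolding h_def by measurable
  have "(\<integral>\<^sup>+t. ennreal (\<bar>A g t\<bar> powr q) \<partial>M) \<le> (\<integral>\<^sup>+t. ennreal (\<bar>A g t\<bar> powr q) \<partial>lebesgue)"
    by (subst nn_integral_restrict_space) (auto intro!: nn_integral_mono simp: indicator_def)
  also have "\<dots> = (\<integral>\<^sup>+t. (\<Sum>n\<in>{1..N}. ennreal (indicator (Isub xs n) t * h n (Linv xs N n t))) \<partial>lebesgue)"
    by (intro nn_integral_cong) (simp add: compressed_copies_abs_powr h_def)
  also have "\<dots> = (\<Sum>n\<in>{1..N}. \<integral>\<^sup>+t. ennreal (indicator (Isub xs n) t * h n (Linv xs N n t)) \<partial>lebesgue)"
    using borel_measurable_Isub_Linv[OF _ h_meas] by (intro nn_integral_sum) auto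
  also have "\<dots> \<le> (\<Sum>n\<in>{1..N}. ennreal ((xs n - xs (n - 1)) / (xs N - xs 0))
      * ennreal ((\<kappa> * Lp_norm M p g) powr q))"
  proof (intro sum_mono)
    fix n assume n: "n \<in> {1..N}"
    have "(\<integral>\<^sup>+t. ennreal (indicator (Isub xs n) t * h n (Linv xs N n t)) \<partial>lebesgue)
        \<le> ennreal ((xs n - xs (n - 1)) / (xs N - xs 0)) * (\<integral>\<^sup>+s. ennreal (h n s) \<partial>M)"
      by (rule nn_integral_Isub_Linv_le[OF n h_meas[OF n]])
    also have "\<dots> \<le> ennreal ((xs n - xs (n - 1)) / (xs N - xs 0)) * ennreal ((\<kappa> * Lp_norm M p g) powr q)"
      using nn_integral_alpha_powr_le[OF n p g] by (intro mult_left_mono) (simp_all add: h_def)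
    finally show "(\<integral>\<^sup>+t. ennreal (indicator (Isub xs n) t * h n (Linv xs N n t)) \<partial>lebesgue)
        \<le> ennreal ((xs n - xs (n - 1)) / (xs N - xs 0)) * ennreal ((\<kappa> * Lp_norm M p g) powr q)" .
  qed
  also have "\<dots> = ennreal ((\<kappa> * Lp_norm M p g) powr q)"
    by (rule sum_Isub_ratios_mult)
  finally have "(\<integral>\<^sup>+t. ennreal (\<bar>A g t\<bar> powr q) \<partial>M) \<le> ennreal ((\<kappa> * Lp_norm M p g) powr q)" .
  from in_Lp_finite_normI[OF _ borel_measurable_compressed_copies[OF in_Lp_borel_measurable[OF g]] _ this]
  show ?thesis
    using \<kappa>_nonneg Lp_norm_nonneg[of M p g] p by simp
qed

lemma
  assumes g: "in_Lp M p g"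
  shows in_Lp_compressed_copies: "in_Lp M p (A g)"
    and Lp_norm_compressed_copies_le: "Lp_norm M p (A g) \<le> \<kappa> * Lp_norm M p g"
  using Lp_norm_compressed_copies_le_infinite[OF _ g] Lp_norm_compressed_copies_le_finite[OF _ _ g]
  by (cases rule: exponent_cases; blast)+

lemma Lp_norm_compressed_copies_iterate_le:
  assumes f: "in_Lp M p f"
  shows "in_Lp M p ((A ^^ k) f) \<and> Lp_norm M p ((A ^^ k) f) \<le> \<kappa> ^ k * Lp_norm M p f"
proof (induction k)
  case (Suc k)
  then have "Lp_norm M p ((A ^^ Suc k) f) \<le> \<kappa> * (\<kappa> ^ k * Lp_norm M p f)"
    using Lp_norm_compressed_copies_le \<kappa>_nonneg by (auto intro: order_trans mult_left_mono)
  then show ?case using in_Lp_compressed_copies Suc by simp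
qed (simp add: f)

(* The fixed point is the Neumann series \<Sum>k. A^k f. *)
lemma exists_fixed_point:
  assumes f: "in_Lp M p f"
  shows "\<exists>g. in_Lp M p g \<and> (AE t in M. f t + A g t = g t)"
proof -
  define h where "h k = (A ^^ k) f" for k
  define G where "G t = (\<Sum>k. h k t)" for t
  have h: "in_Lp M p (h k)" "Lp_norm M p (h k) \<le> Lp_norm M p f * \<kappa> ^ k" for k
    using Lp_norm_compressed_copies_iterate_le[OF f, of k] by (simp_all add: h_def mult.commute)
  have "summable (\<lambda>k. Lp_norm M p f * \<kappa> ^ k)"
    using \<kappa>_nonneg \<kappa>_less_1 by (intro summable_mult summable_geometric) simp
  then have sum: "summable (\<lambda>k. Lp_norm M p (h k))"
    by (rule summable_comparison_test') (use h(2) in \<open>simp add: Lp_norm_nonneg\<close>)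
  have "AE t in M. \<bar>G t\<bar> \<le> \<bar>\<Sum>k. \<bar>h k t\<bar>\<bar>"
    using AE_summable_abs[OF h(1) sum]
    by (rule eventually_mono) (auto simp: G_def intro: order_trans[OF summable_rabs])
  then have "in_Lp M p G"
    using in_Lp_borel_measurable[OF h(1)]
    by (intro in_Lp_mono_AE[OF _ in_Lp_suminf_abs[OF h(1) sum]]) (simp_all add: G_def[abs_def])
  moreover have "AE t in M. f t + A G t = G t"
    using AE_summable_abs[OF h(1) sum]
  proof (rule eventually_mono)
    fix t assume "summable (\<lambda>k. \<bar>h k t\<bar>)"
    from suminf_iterates_compressed_copies[OF this[unfolded h_def]]
    show "f t + A G t = G t" by (simp add: G_def[abs_def] h_def[abs_def])
  qed
  ultimately show ?thesis by blast
qed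

(* fractal chooses some fixed point by SOME; only its fixed-point equation is used. *)
lemma
  assumes f: "in_Lp M p f"
  shows in_Lp_fractal: "in_Lp M p (fractal p xs N \<alpha> f (\<lambda>_. 0))"
    and AE_fractal_eq: "AE t in M. fractal p xs N \<alpha> f (\<lambda>_. 0) t - A (fractal p xs N \<alpha> f (\<lambda>_. 0)) t = f t"
proof -
  have "\<exists>g. inLp p xs N g \<and> (AE t in M. Top xs N \<alpha> f (\<lambda>_. 0) g t = g t)"
    using exists_fixed_point[OF f] by (simp add: inLp_eq_in_Lp Top_zero_eq)
  then have "inLp p xs N (fractal p xs N \<alpha> f (\<lambda>_. 0)) \<and>
      (AE t in M. Top xs N \<alpha> f (\<lambda>_. 0) (fractal p xs N \<alpha> f (\<lambda>_. 0)) t = fractal p xs N \<alpha> f (\<lambda>_. 0) t)"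
    unfolding fractal_def by (rule someI_ex)
  then show "in_Lp M p (fractal p xs N \<alpha> f (\<lambda>_. 0))"
    "AE t in M. fractal p xs N \<alpha> f (\<lambda>_. 0) t - A (fractal p xs N \<alpha> f (\<lambda>_. 0)) t = f t"
    by (auto simp: inLp_eq_in_Lp Top_zero_eq elim: eventually_mono)
qed

lemma Lp_norm_id_minus_compressed_copies_bounds:
  assumes r: "in_Lp M p r" and e: "e \<in> borel_measurable M" and eq: "AE t in M. r t - A r t = e t"
  shows "(1 - \<kappa>) * Lp_norm M p r \<le> Lp_norm M p e" "Lp_norm M p e \<le> (1 + \<kappa>) * Lp_norm M p r"
proof -
  have "Lp_norm M p e = Lp_norm M p (\<lambda>t. r t - A r t)"
    using eq by (intro Lp_norm_cong_AE[OF e in_Lp_diff[OF r in_Lp_compressed_copies[OF r]]])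
      (auto elim: eventually_mono)
  then show "(1 - \<kappa>) * Lp_norm M p r \<le> Lp_norm M p e" "Lp_norm M p e \<le> (1 + \<kappa>) * Lp_norm M p r"
    using Lp_norm_perturbation_bounds[OF r in_Lp_compressed_copies[OF r] Lp_norm_compressed_copies_le[OF r]]
    by simp_all
qed

(* A is linear, so r = h - \<Sum>m<n. c m * F m satisfies r - A r = h - A h - \<Sum>m<n. c m * fs m. *)
lemma fractal_expansion_iff:
  assumes fs: "\<And>m. in_Lp M p (fs m)" and h: "in_Lp M p h"
  shows "(\<lambda>n. Lp_norm M p (\<lambda>t. h t - (\<Sum>m<n. c m * fractal p xs N \<alpha> (fs m) (\<lambda>_. 0) t))) \<longlonglongrightarrow> 0
    \<longleftrightarrow> (\<lambda>n. Lp_norm M p (\<lambda>t. h t - A h t - (\<Sum>m<n. c m * fs m t))) \<longlonglongrightarrow> 0"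
proof (rule LIMSEQ_zero_iff_mutually_bounded)
  fix n
  define F where "F m = fractal p xs N \<alpha> (fs m) (\<lambda>_. 0)" for m
  define r where "r t = h t - (\<Sum>m<n. c m * F m t)" for t
  define e where "e t = h t - A h t - (\<Sum>m<n. c m * fs m t)" for t
  have r_Lp: "in_Lp M p r"
    unfolding r_def F_def by (intro in_Lp_diff h in_Lp_sum in_Lp_cmult in_Lp_fractal fs) simp
  have e_Lp: "in_Lp M p e"
    unfolding e_def by (intro in_Lp_diff h in_Lp_compressed_copies in_Lp_sum in_Lp_cmult fs) simp
  have "AE t in M. \<forall>m. F m t - A (F m) t = fs m t"
    unfolding AE_all_countable F_def using AE_fractal_eq[OF fs] by blast
  then have "AE t in M. r t - A r t = e t"
  proof (rule eventually_mono)
    fix t assume F_eq: "\<forall>m. F m t - A (F m) t = fs m t"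
    have "r t - A r t = h t - A h t - (\<Sum>m<n. c m * (F m t - A (F m) t))"
      unfolding r_def compressed_copies_diff compressed_copies_sum
      by (simp add: algebra_simps sum_subtractf)
    then show "r t - A r t = e t" by (simp add: F_eq e_def)
  qed
  note bounds = Lp_norm_id_minus_compressed_copies_bounds[OF r_Lp in_Lp_borel_measurable[OF e_Lp] this]
  show "0 \<le> Lp_norm M p r" "0 \<le> Lp_norm M p e" by (simp_all add: Lp_norm_nonneg)
  show "Lp_norm M p e \<le> (1 + \<kappa>) * Lp_norm M p r" by (rule bounds(2))
  show "Lp_norm M p r \<le> 1 / (1 - \<kappa>) * Lp_norm M p e"
    using bounds(1) \<kappa>_less_1 by (simp add: field_simps)
qed

lemma schauder_basis_fractal:
  assumes "schauder_basis p xs N fs"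
  shows "schauder_basis p xs N (\<lambda>m. fractal p xs N \<alpha> (fs m) (\<lambda>_. 0))"
proof -
  have fs: "\<And>m. in_Lp M p (fs m)"
    and expansion: "\<And>k. in_Lp M p k \<Longrightarrow> \<exists>!c. (\<lambda>n. Lp_norm M p (\<lambda>t. k t - (\<Sum>m<n. c m * fs m t))) \<longlonglongrightarrow> 0"
    using assms by (simp_all add: schauder_basis_def inLp_eq_in_Lp Lpnorm_eq_Lp_norm)
  have "\<exists>!c. (\<lambda>n. Lp_norm M p (\<lambda>t. h t - (\<Sum>m<n. c m * fractal p xs N \<alpha> (fs m) (\<lambda>_. 0) t))) \<longlonglongrightarrow> 0"
    if h: "in_Lp M p h" for h
    unfolding fractal_expansion_iff[OF fs h]
    by (rule expansion) (intro in_Lp_diff h in_Lp_compressed_copies)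
  then show ?thesis
    using in_Lp_fractal[OF fs] by (simp add: schauder_basis_def inLp_eq_in_Lp Lpnorm_eq_Lp_norm)
qed

lemma bounded_seq_fractal:
  assumes fs: "\<And>m. in_Lp M p (fs m)" and bounded: "bounded_seq p xs N fs"
  shows "bounded_seq p xs N (\<lambda>m. fractal p xs N \<alpha> (fs m) (\<lambda>_. 0))"
proof -
  obtain k K where kK: "0 < k" "k \<le> K" "\<And>m. k \<le> Lp_norm M p (fs m) \<and> Lp_norm M p (fs m) \<le> K"
    using bounded by (auto simp: bounded_seq_def Lpnorm_eq_Lp_norm)
  have "k / (1 + \<kappa>) \<le> Lp_norm M p (fractal p xs N \<alpha> (fs m) (\<lambda>_. 0))
      \<and> Lp_norm M p (fractal p xs N \<alpha> (fs m) (\<lambda>_. 0)) \<le> K / (1 - \<kappa>)" for m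
    using Lp_norm_id_minus_compressed_copies_bounds[OF in_Lp_fractal[OF fs]
        in_Lp_borel_measurable[OF fs] AE_fractal_eq[OF fs], of m] kK(3)[of m] \<kappa>_nonneg \<kappa>_less_1
    by (auto simp: field_simps)
  moreover have "0 < k / (1 + \<kappa>)" "k / (1 + \<kappa>) \<le> K / (1 - \<kappa>)"
    using kK(1,2) \<kappa>_nonneg \<kappa>_less_1 by (auto intro: frac_le)
  ultimately show ?thesis
    unfolding bounded_seq_def Lpnorm_eq_Lp_norm by blast
qed

end

theorem proposition6p12:
  fixes p :: ereal and N :: nat and xs :: "nat \<Rightarrow> real"
    and \<alpha> :: "nat \<Rightarrow> real \<Rightarrow> real" and fs :: "nat \<Rightarrow> real \<Rightarrow> real"
  assumes "N \<ge> 2"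
    and "\<And>i. i < N \<Longrightarrow> xs i < xs (Suc i)"
    and "1 \<le> p"
    and "\<And>n. n \<in> {1..N} \<Longrightarrow> \<alpha> n \<in> borel_measurable (lebesgue_on (Ivl xs N))"
    and "Lambda xs N \<alpha> < 1 / 2"
    and "schauder_basis p xs N fs"
  shows "schauder_basis p xs N (\<lambda>m. fractal p xs N \<alpha> (fs m) (\<lambda>_. 0)) \<and>
         (bounded_seq p xs N fs \<longrightarrow>
            bounded_seq p xs N (\<lambda>m. fractal p xs N \<alpha> (fs m) (\<lambda>_. 0)))"
proof -
  have "Lambda xs N \<alpha> < ereal (1 / 2)"
    using assms(5) by (simp add: one_ereal_def ereal_divide[symmetric])
  then interpret fractal_setting N xs p \<alpha> "1 / 2"
    using assms(1-4) by unfold_locales (auto dest: AE_abs_le_of_Lambda_less)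
  have "in_Lp M p (fs m)" for m
    using assms(6) by (simp add: schauder_basis_def inLp_eq_in_Lp)
  then show ?thesis
    using schauder_basis_fractal[OF assms(6)] bounded_seq_fractal by blast
qed

end
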